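(* Let $A \in \mathbb{R}^{m\times n}$, $b \in \mathbb{R}^m$, $x_0 \in \mathbb{R}^n$, and run the F-AB-GMRES process described in the context with arbitrary vectors $z_1,z_2,\dots \in\mathbb{R}^n$. Assume that $\beta = \|r_0\|_2 \neq 0$ and that $k-1$ steps have been successfully performed, i.e. $h_{i+1,i}\neq 0$ for all $i<k$. Assume in addition that the matrix $H_k$ is nonsingular. Then $x_k$ is a solution of $Ax=b$ if and only if $h_{k+1,k}=0$.
   Context: Flexible AB-GMRES (F-AB-GMRES). Given $A \in \mathbb{R}^{m\times n}$, $b\in\mathbb{R}^m$ and an initial vector $x_0\in\mathbb{R}^n$, set $r_0 = b - A x_0$, $\beta = \|r_0\|_2$, $v_1 = r_0/\beta$. For $k = 1,2,\dots$: choose a vector $z_k \in \mathbb{R}^n$ (in the paper, $z_k = B^{(\ell_k)} v_k$ is the result of applying $\ell_k$ steps of a Kaczmarz-type iteration, possibly randomized or greedy, to $Az = v_k$, so the map $v_k \mapsto z_k$ may change with $k$; the results hold for arbitrary $z_k$); set $w_k = A z_k$; for $i = 1,\dots,k$ set $h_{i,k} = w_k^{\mathsf T} v_i$ and then $w_k \leftarrow w_k - h_{i,k} v_i$; set $h_{k+1,k} = \|w_k\|_2$ and, if $h_{k+1,k}\neq 0$, $v_{k+1} = w_k/h_{k+1,k}$. Let $Z_k = [z_1,\dots,z_k] \in \mathbb{R}^{n\times k}$, $V_k = [v_1,\dots,v_k]\in\mathbb{R}^{m\times k}$, let $\bar H_k = \{h_{i,j}\}_{1\le i\le k+1,\,1\le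 j\le k} \in \mathbb{R}^{(k+1)\times k}$ (upper Hessenberg, with $h_{i,j}=0$ for $i>j+1$), and let $H_k$ be the $k\times k$ matrix obtained from $\bar H_k$ by deleting its last row. The $k$th iterate is $x_k = x_0 + Z_k y_k$, where $y_k = \arg\min_{y\in\mathbb{R}^k}\|\beta e_1 - \bar H_k y\|_2$ and $e_1$ is the first column of the $(k+1)\times(k+1)$ identity matrix. *)

theory Defs
  imports "Jordan_Normal_Form.Matrix"
begin

definition vnorm :: "real vec \<Rightarrow> real" where
  "vnorm v = sqrt (v \<bullet> v)"

fun mgs :: "real vec \<Rightarrow> real vec list \<Rightarrow> real list \<times> real vec" where
  "mgs w [] = ([], w)"
| "mgs w (v # vs) =
     (let h = w \<bullet> v; (hs, w') = mgs (w - h \<cdot>\<^sub>v v) vs in (h # hs, w'))"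

definition fab_r0 :: "real mat \<Rightarrow> real vec \<Rightarrow> real vec \<Rightarrow> real vec" where
  "fab_r0 A b x0 = b - A *\<^sub>v x0"

definition fab_beta :: "real mat \<Rightarrow> real vec \<Rightarrow> real vec \<Rightarrow> real" where
  "fab_beta A b x0 = vnorm (fab_r0 A b x0)"

text \<open>fab_basis A b x0 z k = [v_1, ..., v_k] (for k steps of the process;
  the z_j are indexed from 1).  When h_{k+1,k} = 0 the vector v_{k+1} is not
  used by the statement (division by zero yields 0 in Isabelle).\<close>
fun fab_basis :: "real mat \<Rightarrow> real vec \<Rightarrow> real vec \<Rightarrow> (nat \<Rightarrow> real vec) \<Rightarrow> nat \<Rightarrow> real vec list" where
  "fab_basis A b x0 z 0 = []"
| "fab_basis A b x0 z (Suc k) =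
     (if k = 0 then [(1 / fab_beta A b x0) \<cdot>\<^sub>v fab_r0 A b x0]
      else (let B = fab_basis A b x0 z k;
                w = snd (mgs (A *\<^sub>v z k) B)
            in B @ [(1 / vnorm w) \<cdot>\<^sub>v w]))"

text \<open>Column j (j \<ge> 1) of the Hessenberg matrix: [h_{1,j}, ..., h_{j+1,j}].\<close>
definition fab_hcol :: "real mat \<Rightarrow> real vec \<Rightarrow> real vec \<Rightarrow> (nat \<Rightarrow> real vec) \<Rightarrow> nat \<Rightarrow> real list" where
  "fab_hcol A b x0 z j =
     (let r = mgs (A *\<^sub>v z j) (fab_basis A b x0 z j) in fst r @ [vnorm (snd r)])"

definition fab_h :: "real mat \<Rightarrow> real vec \<Rightarrow> real vec \<Rightarrow> (nat \<Rightarrow> real vec) \<Rightarrow> nat \<Rightarrow> nat \<Rightarrow> real" where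
  "fab_h A b x0 z i j =
     (if 1 \<le> j \<and> 1 \<le> i \<and> i \<le> j + 1 then fab_hcol A b x0 z j ! (i - 1) else 0)"

definition fab_Hbar :: "real mat \<Rightarrow> real vec \<Rightarrow> real vec \<Rightarrow> (nat \<Rightarrow> real vec) \<Rightarrow> nat \<Rightarrow> real mat" where
  "fab_Hbar A b x0 z k = mat (k + 1) k (\<lambda>(i, j). fab_h A b x0 z (i + 1) (j + 1))"

definition fab_H :: "real mat \<Rightarrow> real vec \<Rightarrow> real vec \<Rightarrow> (nat \<Rightarrow> real vec) \<Rightarrow> nat \<Rightarrow> real mat" where
  "fab_H A b x0 z k = mat k k (\<lambda>(i, j). fab_h A b x0 z (i + 1) (j + 1))"

definition fab_Z :: "nat \<Rightarrow> (nat \<Rightarrow> real vec) \<Rightarrow> nat \<Rightarrow> real mat" where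
  "fab_Z n z k = mat n k (\<lambda>(i, j). z (j + 1) $ i)"

definition fab_y :: "real mat \<Rightarrow> real vec \<Rightarrow> real vec \<Rightarrow> (nat \<Rightarrow> real vec) \<Rightarrow> nat \<Rightarrow> real vec" where
  "fab_y A b x0 z k =
     (SOME y. y \<in> carrier_vec k \<and>
        (\<forall>y' \<in> carrier_vec k.
           vnorm (fab_beta A b x0 \<cdot>\<^sub>v unit_vec (k + 1) 0 - fab_Hbar A b x0 z k *\<^sub>v y)
           \<le> vnorm (fab_beta A b x0 \<cdot>\<^sub>v unit_vec (k + 1) 0 - fab_Hbar A b x0 z k *\<^sub>v y')))"

definition fab_x :: "real mat \<Rightarrow> real vec \<Rightarrow> real vec \<Rightarrow> (nat \<Rightarrow> real vec) \<Rightarrow> nat \<Rightarrow> real vec" where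
  "fab_x A b x0 z k = x0 + fab_Z (dim_vec x0) z k *\<^sub>v fab_y A b x0 z k"

end

theory Submission
  imports Defs "Jordan_Normal_Form.Determinant"
begin

text \<open>By the Arnoldi relation A Z_k = V_{k+1} Hbar_k, the residual of x_0 + Z_k y is
  V_{k+1} (\<beta> e_1 - Hbar_k y).  If h_{k+1,k} = 0, the last row of Hbar_k vanishes and the
  nonsingular H_k yields y with Hbar_k y = \<beta> e_1; so the least-squares residual vanishes and
  x_k solves A x = b.  If h_{k+1,k} \<noteq> 0, the basis V_{k+1} is orthonormal, so a solution x_k
  forces Hbar_k y_k = \<beta> e_1; since the subdiagonal of the Hessenberg matrix Hbar_k has no zero,
  back substitution in rows 2..k+1 gives y_k = 0, and the first row then says \<beta> = 0.\<close>

lemma scalar_prod_self_nonneg: "0 \<le> (v :: real vec) \<bullet> v"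
  using conjugate_square_ge_0_vec[of v] by simp

lemma scalar_prod_self_eq_0_iff:
  "(v :: real vec) \<in> carrier_vec N \<Longrightarrow> v \<bullet> v = 0 \<longleftrightarrow> v = 0\<^sub>v N"
  using conjugate_square_eq_0_vec[of v N] by simp

lemma vnorm_eq_0_iff: "v \<in> carrier_vec N \<Longrightarrow> vnorm v = 0 \<longleftrightarrow> v = 0\<^sub>v N"
  unfolding vnorm_def by (simp add: scalar_prod_self_eq_0_iff scalar_prod_self_nonneg)

lemma vnorm_square: "vnorm v ^ 2 = v \<bullet> v"
  unfolding vnorm_def by (rule real_sqrt_pow2[OF scalar_prod_self_nonneg])

lemma vnorm_nonneg: "0 \<le> vnorm v"
  unfolding vnorm_def by (simp add: scalar_prod_self_nonneg)

lemma vnorm_le_iff: "vnorm v \<le> vnorm w \<longleftrightarrow> v \<bullet> v \<le> w \<bullet> w"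
  unfolding vnorm_def by simp

definition orthonormal :: "real vec list \<Rightarrow> bool" where
  "orthonormal vs \<longleftrightarrow>
     (\<forall>i < length vs. \<forall>j < length vs. vs ! i \<bullet> vs ! j = (if i = j then 1 else 0))"

lemma orthonormal_ConsD:
  assumes "orthonormal (v # vs)"
  shows "v \<bullet> v = 1" and "\<And>x. x \<in> set vs \<Longrightarrow> x \<bullet> v = 0" and "orthonormal vs"
proof -
  show "v \<bullet> v = 1" using assms[unfolded orthonormal_def, rule_format, of 0 0] by simp
  show "x \<bullet> v = 0" if "x \<in> set vs" for x
    using that assms[unfolded orthonormal_def, rule_format, of _ 0]
    by (fastforce simp: in_set_conv_nth)
  show "orthonormal vs"
    using assms[unfolded orthonormal_def, rule_format, of "Suc _" "Suc _"]
    by (simp add: orthonormal_def)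
qed

lemma orthonormal_snoc:
  assumes "orthonormal xs" and "x \<bullet> x = 1"
    and "\<And>l. l < length xs \<Longrightarrow> x \<bullet> xs ! l = 0" and "\<And>l. l < length xs \<Longrightarrow> xs ! l \<bullet> x = 0"
  shows "orthonormal (xs @ [x])"
  using assms unfolding orthonormal_def by (auto simp: nth_append less_Suc_eq)

lemma orthonormal_lincomb_coeff_eq_0:
  assumes on: "orthonormal vs" and vs: "set vs \<subseteq> carrier_vec N"
    and comb: "\<And>p. p < N \<Longrightarrow> (\<Sum>i<length vs. d i * vs ! i $ p) = 0" and l: "l < length vs"
  shows "d l = 0"
proof -
  have dim: "\<And>i. i < length vs \<Longrightarrow> dim_vec (vs ! i) = N" using vs by (auto dest: nth_mem)
  have "0 = (\<Sum>p<N. (\<Sum>i<length vs. d i * vs ! i $ p) * vs ! l $ p)"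
    using comb by simp
  also have "\<dots> = (\<Sum>i<length vs. d i * (vs ! i \<bullet> vs ! l))"
    using dim l by (simp add: scalar_prod_def lessThan_atLeast0 sum_distrib_left sum_distrib_right
        mult_ac) (rule sum.swap)
  also have "\<dots> = (\<Sum>i<length vs. if i = l then d l else 0)"
    using on unfolding orthonormal_def by (intro sum.cong) (auto simp: l)
  also have "\<dots> = d l" using l by simp
  finally show ?thesis by simp
qed

lemma mgs_Cons:
  "mgs w (v # vs) =
     (w \<bullet> v # fst (mgs (w - (w \<bullet> v) \<cdot>\<^sub>v v) vs), snd (mgs (w - (w \<bullet> v) \<cdot>\<^sub>v v) vs))"
  by (cases "mgs (w - (w \<bullet> v) \<cdot>\<^sub>v v) vs") simp

declare mgs.simps(2)[simp del]

lemma length_mgs: "length (fst (mgs w vs)) = length vs"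
  by (induction vs arbitrary: w) (auto simp: mgs_Cons)

lemma mgs_carrier:
  "w \<in> carrier_vec N \<Longrightarrow> set vs \<subseteq> carrier_vec N \<Longrightarrow> snd (mgs w vs) \<in> carrier_vec N"
  by (induction vs arbitrary: w) (auto simp: mgs_Cons)

lemma mgs_decomposition:
  assumes "w \<in> carrier_vec N" and "set vs \<subseteq> carrier_vec N" and "p < N"
  shows "w $ p = snd (mgs w vs) $ p + (\<Sum>i<length vs. fst (mgs w vs) ! i * vs ! i $ p)"
  using assms
proof (induction vs arbitrary: w)
  case Nil
  then show ?case by simp
next
  case (Cons v vs)
  define w' where "w' = w - (w \<bullet> v) \<cdot>\<^sub>v v"
  have w': "w' \<in> carrier_vec N" using Cons.prems unfolding w'_def by auto
  have "w $ p = w' $ p + (w \<bullet> v) * v $ p"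
    using Cons.prems w' unfolding w'_def by auto
  also have "w' $ p = snd (mgs w' vs) $ p + (\<Sum>i<length vs. fst (mgs w' vs) ! i * vs ! i $ p)"
    using Cons.IH[OF w'] Cons.prems by auto
  finally show ?case
    unfolding mgs_Cons w'_def[symmetric] length_Cons sum.lessThan_Suc_shift by simp
qed

lemma mgs_scalar_prod_orthogonal:
  assumes "w \<in> carrier_vec N" and "set vs \<subseteq> carrier_vec N" and "u \<in> carrier_vec N"
    and "\<And>x. x \<in> set vs \<Longrightarrow> x \<bullet> u = 0"
  shows "snd (mgs w vs) \<bullet> u = w \<bullet> u"
  using assms
proof (induction vs arbitrary: w)
  case Nil
  then show ?case by simp
next
  case (Cons v vs)
  define w' where "w' = w - (w \<bullet> v) \<cdot>\<^sub>v v"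
  have w': "w' \<in> carrier_vec N" using Cons.prems unfolding w'_def by auto
  have "w' \<bullet> u = w \<bullet> u - (w \<bullet> v) * (v \<bullet> u)"
    unfolding w'_def using Cons.prems by (subst minus_scalar_prod_distrib[of _ N]) auto
  then show ?case
    unfolding mgs_Cons w'_def[symmetric] using Cons.IH[OF w'] Cons.prems by auto
qed

text \<open>Once w has been projected off v, the later projections, onto vectors orthogonal to v,
  keep it orthogonal to v.\<close>
lemma mgs_orthogonal:
  assumes "w \<in> carrier_vec N" and "set vs \<subseteq> carrier_vec N" and "orthonormal vs"
    and "i < length vs"
  shows "snd (mgs w vs) \<bullet> vs ! i = 0"
  using assms
proof (induction vs arbitrary: w i)
  case Nil
  then show ?case by simp
next
  case (Cons v vs)
  define w' where "w' = w - (w \<bullet> v) \<cdot>\<^sub>v v"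
  have w': "w' \<in> carrier_vec N" using Cons.prems unfolding w'_def by auto
  note on = orthonormal_ConsD[OF Cons.prems(3)]
  show ?case
  proof (cases i)
    case 0
    have "snd (mgs w' vs) \<bullet> v = w' \<bullet> v"
      by (rule mgs_scalar_prod_orthogonal[OF w']) (use Cons.prems on in auto)
    also have "\<dots> = w \<bullet> v - (w \<bullet> v) * (v \<bullet> v)"
      unfolding w'_def using Cons.prems by (subst minus_scalar_prod_distrib[of _ N]) auto
    finally show ?thesis using 0 on(1) unfolding mgs_Cons w'_def[symmetric] by simp
  next
    case (Suc i')
    then show ?thesis
      unfolding mgs_Cons w'_def[symmetric] using Cons.IH[OF w' _ on(3)] Cons.prems by auto
  qed
qed

lemma hessenberg_eq_0_if_rows_eq_0:
  fixes G :: "'a :: field mat"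
  assumes G: "G \<in> carrier_mat (k + 1) k"
    and hess: "\<And>i j. j + 1 < i \<Longrightarrow> i \<le> k \<Longrightarrow> j < k \<Longrightarrow> G $$ (i, j) = 0"
    and subdiag: "\<And>j. j < k \<Longrightarrow> G $$ (j + 1, j) \<noteq> 0"
    and y: "y \<in> carrier_vec k"
    and rows: "\<And>i. 1 \<le> i \<Longrightarrow> i \<le> k \<Longrightarrow> (G *\<^sub>v y) $ i = 0"
  shows "y = 0\<^sub>v k"
proof -
  have "y $ j = 0" if "j < k" for j
    using that
  proof (induction "k - j" arbitrary: j rule: less_induct)
    case less
    have later: "y $ j' = 0" if "j < j'" "j' < k" for j'
      using less.hyps[of j'] that by auto
    have "0 = (G *\<^sub>v y) $ (j + 1)" using rows[of "j + 1"] less.prems by simp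
    also have "\<dots> = (\<Sum>j'<k. G $$ (j + 1, j') * y $ j')"
      using G y less.prems by (simp add: scalar_prod_def lessThan_atLeast0)
    also have "\<dots> = (\<Sum>j'<k. if j' = j then G $$ (j + 1, j) * y $ j else 0)"
    proof (intro sum.cong refl)
      fix j' assume "j' \<in> {..<k}"
      then consider "j' < j" | "j' = j" | "j < j'" "j' < k" by fastforce
      then show "G $$ (j + 1, j') * y $ j' = (if j' = j then G $$ (j + 1, j) * y $ j else 0)"
        using hess[of j' "j + 1"] later[of j'] less.prems by cases auto
    qed
    also have "\<dots> = G $$ (j + 1, j) * y $ j" using less.prems by simp
    finally show ?case using subdiag[OF less.prems] by simp
  qed
  then show ?thesis using y by (intro eq_vecI) auto
qed

lemma solvable_if_invertible_top_block:
  fixes G :: "'a :: comm_ring_1 mat"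
  assumes G: "G \<in> carrier_mat (k + 1) k"
    and H: "H \<in> carrier_mat k k" "invertible_mat H"
    and top: "\<And>i j. i < k \<Longrightarrow> j < k \<Longrightarrow> H $$ (i, j) = G $$ (i, j)"
    and last_row: "\<And>j. j < k \<Longrightarrow> G $$ (k, j) = 0"
    and c: "c \<in> carrier_vec (k + 1)" "c $ k = 0"
  shows "\<exists>y \<in> carrier_vec k. G *\<^sub>v y = c"
proof -
  obtain B where HB: "H * B = 1\<^sub>m k" and BH: "B * H = 1\<^sub>m (dim_row B)"
    using H unfolding invertible_mat_def inverts_mat_def by auto
  have B: "B \<in> carrier_mat k k"
    using HB BH H by (metis carrier_matD carrier_matI index_mult_mat(2,3) index_one_mat(2,3))
  define c' where "c' = vec k (\<lambda>i. c $ i)"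
  define y where "y = B *\<^sub>v c'"
  have y: "y \<in> carrier_vec k" unfolding y_def carrier_vec_def using B by simp
  have Hy: "H *\<^sub>v y = c'"
    unfolding y_def using assoc_mult_mat_vec[OF H(1) B, of c'] HB by (simp add: c'_def)
  have "G *\<^sub>v y = c"
  proof (rule eq_vecI)
    fix i assume "i < dim_vec c"
    then consider "i < k" | "i = k" using c by fastforce
    then show "(G *\<^sub>v y) $ i = c $ i"
    proof cases
      case 1
      have "row G i = row H i" using G H 1 top by (intro eq_vecI) auto
      then show ?thesis using Hy G H 1 y by (metis c'_def index_mult_mat_vec index_vec carrier_matD(1) less_SucI Suc_eq_plus1)
    next
      case 2
      have "row G k = 0\<^sub>v k" using G last_row by (intro eq_vecI) auto
      then show ?thesis using G y 2 c by simp
    qed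
  qed (use G c in auto)
  with y show ?thesis by blast
qed

lemma least_squares_if_normal_equations:
  fixes G :: "real mat"
  assumes G: "G \<in> carrier_mat N K" and c: "c \<in> carrier_vec N" and y: "y \<in> carrier_vec K"
    and normal: "transpose_mat G *\<^sub>v (c - G *\<^sub>v y) = 0\<^sub>v K"
    and y': "y' \<in> carrier_vec K"
  shows "vnorm (c - G *\<^sub>v y) \<le> vnorm (c - G *\<^sub>v y')"
proof -
  define r where "r = c - G *\<^sub>v y"
  define d where "d = G *\<^sub>v (y - y')"
  have r: "r \<in> carrier_vec N" and d: "d \<in> carrier_vec N"
    unfolding r_def d_def using G c y y' by auto
  have split: "c - G *\<^sub>v y' = r + d"
    unfolding r_def d_def using mult_minus_distrib_mat_vec[OF G y y'] G c y y'
    by (intro eq_vecI) auto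
  have "r \<bullet> d = 0"
    unfolding d_def using transpose_vec_mult_scalar[OF G _ r, of "y - y'"] normal y y'
    by (simp add: r_def)
  then have "(r + d) \<bullet> (r + d) = r \<bullet> r + d \<bullet> d"
    using r d comm_scalar_prod[OF d r]
    by (simp add: add_scalar_prod_distrib[of _ N] scalar_prod_add_distrib[of _ N])
  then show ?thesis
    unfolding vnorm_le_iff split r_def[symmetric] using scalar_prod_self_nonneg[of d] by simp
qed

text \<open>The normal equations are solvable because the Gram matrix of an injective map is nonsingular.\<close>
lemma least_squares_exists:
  fixes G :: "real mat"
  assumes G: "G \<in> carrier_mat N K" and c: "c \<in> carrier_vec N"
    and inj: "\<And>y. y \<in> carrier_vec K \<Longrightarrow> G *\<^sub>v y = 0\<^sub>v N \<Longrightarrow> y = 0\<^sub>v K"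
  shows "\<exists>y \<in> carrier_vec K. \<forall>y' \<in> carrier_vec K. vnorm (c - G *\<^sub>v y) \<le> vnorm (c - G *\<^sub>v y')"
proof -
  define M where "M = transpose_mat G * G"
  have M: "M \<in> carrier_mat K K" unfolding M_def using G by auto
  have GT: "transpose_mat G \<in> carrier_mat K N" using G by auto
  have "det M \<noteq> 0"
  proof
    assume "det M = 0"
    then obtain v where v: "v \<in> carrier_vec K" "v \<noteq> 0\<^sub>v K" "M *\<^sub>v v = 0\<^sub>v K"
      using det_0_iff_vec_prod_zero_field[OF M] by auto
    have Gv: "G *\<^sub>v v \<in> carrier_vec N" using G v by auto
    have "(G *\<^sub>v v) \<bullet> (G *\<^sub>v v) = (M *\<^sub>v v) \<bullet> v"
      using transpose_vec_mult_scalar[OF G v(1) Gv] G v unfolding M_def by simp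
    then have "G *\<^sub>v v = 0\<^sub>v N" using v Gv scalar_prod_self_eq_0_iff by simp
    then show False using inj v by auto
  qed
  then obtain B where B: "B \<in> carrier_mat K K" "M * B = 1\<^sub>m K"
    using det_non_zero_imp_unit[OF M] unfolding Units_def ring_mat_def by auto
  define y where "y = B *\<^sub>v (transpose_mat G *\<^sub>v c)"
  have y: "y \<in> carrier_vec K" unfolding y_def using B GT c by auto
  have "M *\<^sub>v y = transpose_mat G *\<^sub>v c"
    unfolding y_def using B GT c M by (metis assoc_mult_mat_vec mult_mat_vec_carrier one_mult_mat_vec)
  then have "transpose_mat G *\<^sub>v (c - G *\<^sub>v y) = 0\<^sub>v K"
    unfolding M_def using mult_minus_distrib_mat_vec[OF GT c, of "G *\<^sub>v y"] G GT y c by auto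
  then show ?thesis using least_squares_if_normal_equations[OF G c y] y by blast
qed

lemma least_squares_exact:
  fixes G :: "real mat"
  assumes G: "G \<in> carrier_mat N K" and c: "c \<in> carrier_vec N"
    and y0: "y0 \<in> carrier_vec K" "G *\<^sub>v y0 = c"
    and y: "y \<in> carrier_vec K" and min: "vnorm (c - G *\<^sub>v y) \<le> vnorm (c - G *\<^sub>v y0)"
  shows "G *\<^sub>v y = c"
proof -
  have r: "c - G *\<^sub>v y \<in> carrier_vec N" using G c y by auto
  have "vnorm (c - G *\<^sub>v y0) = 0" using y0 c by (simp add: vnorm_eq_0_iff[of _ N])
  then have "vnorm (c - G *\<^sub>v y) = 0" using min vnorm_nonneg[of "c - G *\<^sub>v y"] by linarith
  then have zero: "c - G *\<^sub>v y = 0\<^sub>v N" using vnorm_eq_0_iff[OF r] by simp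
  show ?thesis
  proof (rule eq_vecI)
    fix i assume "i < dim_vec c"
    then show "(G *\<^sub>v y) $ i = c $ i" using arg_cong[OF zero, of "\<lambda>v. v $ i"] G c by auto
  qed (use G c in auto)
qed

text \<open>With 0-based indices, fab_v ... i is the paper's v_{i+1}, and fab_w ... j is the vector w_j
  after orthogonalisation, before normalisation.\<close>
definition fab_v :: "real mat \<Rightarrow> real vec \<Rightarrow> real vec \<Rightarrow> (nat \<Rightarrow> real vec) \<Rightarrow> nat \<Rightarrow> real vec" where
  "fab_v A b x0 z i = fab_basis A b x0 z (Suc i) ! i"

definition fab_w :: "real mat \<Rightarrow> real vec \<Rightarrow> real vec \<Rightarrow> (nat \<Rightarrow> real vec) \<Rightarrow> nat \<Rightarrow> real vec" where
  "fab_w A b x0 z j = snd (mgs (A *\<^sub>v z j) (fab_basis A b x0 z j))"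

lemma fab_basis_Suc:
  "fab_basis A b x0 z (Suc j) = fab_basis A b x0 z j @
     [if j = 0 then (1 / fab_beta A b x0) \<cdot>\<^sub>v fab_r0 A b x0
      else (1 / vnorm (fab_w A b x0 z j)) \<cdot>\<^sub>v fab_w A b x0 z j]"
  by (cases j) (simp_all add: fab_w_def Let_def)

declare fab_basis.simps(2)[simp del]

lemma length_fab_basis: "length (fab_basis A b x0 z j) = j"
  by (induction j) (simp_all add: fab_basis_Suc)

lemma fab_basis_eq_map: "fab_basis A b x0 z j = map (fab_v A b x0 z) [0..<j]"
proof (induction j)
  case (Suc j)
  have "fab_basis A b x0 z (Suc j) = fab_basis A b x0 z j @ [fab_v A b x0 z j]"
    unfolding fab_v_def using length_fab_basis[of A b x0 z j]
    by (simp add: fab_basis_Suc nth_append)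
  then show ?case using Suc by simp
qed simp

lemma fab_basis_nth: "i < j \<Longrightarrow> fab_basis A b x0 z j ! i = fab_v A b x0 z i"
  by (simp add: fab_basis_eq_map)

lemma fab_v_0: "fab_v A b x0 z 0 = (1 / fab_beta A b x0) \<cdot>\<^sub>v fab_r0 A b x0"
  unfolding fab_v_def by (simp add: fab_basis.simps(2))

lemma fab_v_normalized:
  "1 \<le> j \<Longrightarrow> fab_v A b x0 z j = (1 / vnorm (fab_w A b x0 z j)) \<cdot>\<^sub>v fab_w A b x0 z j"
  unfolding fab_v_def using length_fab_basis[of A b x0 z j]
  by (simp add: fab_basis_Suc nth_append)

lemma fab_h_column:
  assumes "1 \<le> j" and "i \<le> j"
  shows "fab_h A b x0 z (i + 1) j =
    (if i < j then fst (mgs (A *\<^sub>v z j) (fab_basis A b x0 z j)) ! i else vnorm (fab_w A b x0 z j))"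
  using assms length_mgs[of "A *\<^sub>v z j" "fab_basis A b x0 z j"] length_fab_basis[of A b x0 z j]
  unfolding fab_h_def fab_hcol_def fab_w_def by (auto simp: Let_def nth_append)

lemma fab_h_eq_0_below_subdiag: "j + 1 < i \<Longrightarrow> fab_h A b x0 z i j = 0"
  unfolding fab_h_def by auto

lemma index_fab_Hbar:
  "i < k + 1 \<Longrightarrow> j < k \<Longrightarrow> fab_Hbar A b x0 z k $$ (i, j) = fab_h A b x0 z (i + 1) (j + 1)"
  unfolding fab_Hbar_def by simp

lemma index_fab_H:
  "i < k \<Longrightarrow> j < k \<Longrightarrow> fab_H A b x0 z k $$ (i, j) = fab_h A b x0 z (i + 1) (j + 1)"
  unfolding fab_H_def by simp

lemma fab_Hbar_carrier: "fab_Hbar A b x0 z k \<in> carrier_mat (k + 1) k"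
  unfolding fab_Hbar_def by simp

lemma fab_H_carrier: "fab_H A b x0 z k \<in> carrier_mat k k"
  unfolding fab_H_def by simp

locale fab_setup =
  fixes A :: "real mat" and b x0 :: "real vec" and z :: "nat \<Rightarrow> real vec" and m n :: nat
  assumes A: "A \<in> carrier_mat m n" and b: "b \<in> carrier_vec m" and x0: "x0 \<in> carrier_vec n"
    and z: "\<And>j. z j \<in> carrier_vec n"
begin

abbreviation "\<beta> \<equiv> fab_beta A b x0"
abbreviation "v \<equiv> fab_v A b x0 z"
abbreviation "w \<equiv> fab_w A b x0 z"
abbreviation "h \<equiv> fab_h A b x0 z"

lemma fab_r0_carrier: "fab_r0 A b x0 \<in> carrier_vec m"
  unfolding fab_r0_def using A b x0 by auto

lemma mult_A_z_carrier: "A *\<^sub>v z j \<in> carrier_vec m"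
  using A z by auto

lemma fab_basis_carrier: "set (fab_basis A b x0 z j) \<subseteq> carrier_vec m"
proof (induction j)
  case (Suc j)
  have "w j \<in> carrier_vec m" unfolding fab_w_def by (rule mgs_carrier[OF mult_A_z_carrier Suc])
  then show ?case using Suc fab_r0_carrier by (simp add: fab_basis_Suc)
qed simp

lemma fab_v_carrier: "v i \<in> carrier_vec m"
  using fab_basis_carrier[of "Suc i"] fab_basis_nth[of i "Suc i"] length_fab_basis
  by (metis lessI nth_mem subsetD)

lemma fab_w_carrier: "w j \<in> carrier_vec m"
  unfolding fab_w_def by (rule mgs_carrier[OF mult_A_z_carrier fab_basis_carrier])

lemma fab_r0_eq: "fab_r0 A b x0 = \<beta> \<cdot>\<^sub>v v 0"
  using fab_r0_carrier vnorm_eq_0_iff[OF fab_r0_carrier] unfolding fab_v_0 fab_beta_def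
  by (cases "vnorm (fab_r0 A b x0) = 0") auto

lemma fab_w_eq: "1 \<le> j \<Longrightarrow> w j = vnorm (w j) \<cdot>\<^sub>v v j"
  using fab_w_carrier vnorm_eq_0_iff[OF fab_w_carrier] fab_v_normalized[of j A b x0 z]
  by (cases "vnorm (w j) = 0") auto

lemma fab_arnoldi:
  assumes "1 \<le> j" and "j \<le> K" and "p < m"
  shows "(A *\<^sub>v z j) $ p = (\<Sum>i<K + 1. h (i + 1) j * v i $ p)"
proof -
  have "(A *\<^sub>v z j) $ p = w j $ p +
      (\<Sum>i<j. fst (mgs (A *\<^sub>v z j) (fab_basis A b x0 z j)) ! i * fab_basis A b x0 z j ! i $ p)"
    using mgs_decomposition[OF mult_A_z_carrier fab_basis_carrier \<open>p < m\<close>] length_fab_basis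
    unfolding fab_w_def by metis
  also have "\<dots> = (\<Sum>i<j + 1. h (i + 1) j * v i $ p)"
    using arg_cong[OF fab_w_eq[OF \<open>1 \<le> j\<close>], of "\<lambda>u. u $ p"] carrier_vecD[OF fab_v_carrier] \<open>p < m\<close>
      fab_h_column[OF \<open>1 \<le> j\<close>] by (simp add: fab_basis_nth)
  also have "\<dots> = (\<Sum>i<K + 1. h (i + 1) j * v i $ p)"
    by (rule sum.mono_neutral_left) (use assms fab_h_eq_0_below_subdiag in auto)
  finally show ?thesis .
qed


lemma fab_basis_orthonormal:
  assumes beta: "\<beta> \<noteq> 0" and "1 \<le> K"
    and subdiag: "\<And>i. 1 \<le> i \<Longrightarrow> i < K \<Longrightarrow> h (i + 1) i \<noteq> 0"
  shows "orthonormal (fab_basis A b x0 z K)"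
  using assms(2,3)
proof (induction K rule: dec_induct)
  case base
  have "v 0 \<bullet> v 0 = (1 / \<beta>) ^ 2 * vnorm (fab_r0 A b x0) ^ 2"
    unfolding fab_v_0 vnorm_square using fab_r0_carrier by (simp add: power2_eq_square)
  also have "\<dots> = 1" using beta by (simp add: fab_beta_def power_divide)
  finally show ?case using fab_basis_eq_map[of A b x0 z 1] by (simp add: orthonormal_def)
next
  case (step K)
  have on: "orthonormal (fab_basis A b x0 z K)" using step by auto
  have nz: "vnorm (w K) \<noteq> 0" using step.prems[of K] step.hyps fab_h_column[of K K] by auto
  have vK: "v K = (1 / vnorm (w K)) \<cdot>\<^sub>v w K" using fab_v_normalized step.hyps by auto
  have "v K \<bullet> v K = (1 / vnorm (w K)) ^ 2 * vnorm (w K) ^ 2"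
    unfolding vK vnorm_square using fab_w_carrier by (simp add: power2_eq_square)
  then have unit: "v K \<bullet> v K = 1" using nz by (simp add: power_divide)
  have orth: "v K \<bullet> v l = 0" if "l < K" for l
  proof -
    have "w K \<bullet> fab_basis A b x0 z K ! l = 0" unfolding fab_w_def
      by (rule mgs_orthogonal[OF mult_A_z_carrier fab_basis_carrier on]) (use that length_fab_basis in auto)
    then show ?thesis
      unfolding vK using that by (simp add: fab_basis_nth smult_scalar_prod_distrib[OF fab_w_carrier fab_v_carrier])
  qed
  show ?case unfolding fab_basis_eq_map upt_Suc_append[OF le0] map_append list.map
  proof (rule orthonormal_snoc[OF on[unfolded fab_basis_eq_map] unit])
    fix l assume "l < length (map v [0..<K])"
    then have l: "l < K" by simp
    then show "v K \<bullet> map v [0..<K] ! l = 0" using orth by simp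
    then show "map v [0..<K] ! l \<bullet> v K = 0"
      using comm_scalar_prod[OF fab_v_carrier fab_v_carrier, of K l] l by simp
  qed
qed

lemma mult_fab_Z_vec:
  assumes "y \<in> carrier_vec k" and "p < m"
  shows "(A *\<^sub>v (fab_Z n z k *\<^sub>v y)) $ p = (\<Sum>j<k. y $ j * (A *\<^sub>v z (j + 1)) $ p)"
proof -
  have "(A *\<^sub>v (fab_Z n z k *\<^sub>v y)) $ p = (\<Sum>q<n. A $$ (p, q) * (\<Sum>j<k. z (j + 1) $ q * y $ j))"
    using A assms unfolding fab_Z_def by (simp add: scalar_prod_def lessThan_atLeast0)
  also have "\<dots> = (\<Sum>j<k. y $ j * (\<Sum>q<n. A $$ (p, q) * z (j + 1) $ q))"
    by (simp add: sum_distrib_left sum.swap[of _ "{..<k}"] mult_ac)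
  also have "\<dots> = (\<Sum>j<k. y $ j * (A *\<^sub>v z (j + 1)) $ p)"
    using A assms z[THEN carrier_vecD] by (simp add: scalar_prod_def lessThan_atLeast0)
  finally show ?thesis .
qed

abbreviation fab_rhs :: "nat \<Rightarrow> real vec" where
  "fab_rhs k \<equiv> \<beta> \<cdot>\<^sub>v unit_vec (k + 1) 0"

lemma fab_residual:
  assumes y: "y \<in> carrier_vec k" and p: "p < m"
  shows "(b - A *\<^sub>v (x0 + fab_Z n z k *\<^sub>v y)) $ p =
    (\<Sum>i<k + 1. (fab_rhs k - fab_Hbar A b x0 z k *\<^sub>v y) $ i * v i $ p)"
proof -
  let ?Hb = "fab_Hbar A b x0 z k"
  have Zy: "fab_Z n z k *\<^sub>v y \<in> carrier_vec n" unfolding fab_Z_def carrier_vec_def by simp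
  have "(b - A *\<^sub>v (x0 + fab_Z n z k *\<^sub>v y)) $ p = fab_r0 A b x0 $ p - (A *\<^sub>v (fab_Z n z k *\<^sub>v y)) $ p"
    using mult_add_distrib_mat_vec[OF A x0 Zy] A b x0 Zy p unfolding fab_r0_def by simp
  also have "fab_r0 A b x0 $ p = \<beta> * v 0 $ p"
    unfolding fab_r0_eq using fab_v_carrier[THEN carrier_vecD] p by simp
  also have "(A *\<^sub>v (fab_Z n z k *\<^sub>v y)) $ p = (\<Sum>j<k. y $ j * (\<Sum>i<k + 1. h (i + 1) (j + 1) * v i $ p))"
    unfolding mult_fab_Z_vec[OF y p] by (intro sum.cong refl) (subst fab_arnoldi[of _ k], use p in auto)
  also have "\<dots> = (\<Sum>i<k + 1. (\<Sum>j<k. h (i + 1) (j + 1) * y $ j) * v i $ p)"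
    unfolding sum_distrib_left sum_distrib_right by (subst sum.swap) (simp add: mult_ac)
  also have "\<dots> = (\<Sum>i<k + 1. (?Hb *\<^sub>v y) $ i * v i $ p)"
    using y by (intro sum.cong refl) (simp add: fab_Hbar_def scalar_prod_def lessThan_atLeast0)
  also have "\<beta> * v 0 $ p - \<dots> = (\<Sum>i<k + 1. (fab_rhs k - ?Hb *\<^sub>v y) $ i * v i $ p)"
    using fab_Hbar_carrier[of A b x0 z k]
    by (simp add: sum_subtractf[symmetric] sum.lessThan_Suc_shift sum_negf algebra_simps del: sum.lessThan_Suc)
  finally show ?thesis .
qed


lemma fab_y_least_squares:
  assumes "\<exists>y \<in> carrier_vec k. \<forall>y' \<in> carrier_vec k.
    vnorm (fab_rhs k - fab_Hbar A b x0 z k *\<^sub>v y) \<le> vnorm (fab_rhs k - fab_Hbar A b x0 z k *\<^sub>v y')"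
  shows "fab_y A b x0 z k \<in> carrier_vec k \<and> (\<forall>y' \<in> carrier_vec k.
    vnorm (fab_rhs k - fab_Hbar A b x0 z k *\<^sub>v fab_y A b x0 z k) \<le> vnorm (fab_rhs k - fab_Hbar A b x0 z k *\<^sub>v y'))"
  using assms unfolding fab_y_def Bex_def by (rule someI_ex)

lemma fab_x_residual:
  assumes "fab_y A b x0 z k \<in> carrier_vec k" and "p < m"
  shows "(b - A *\<^sub>v fab_x A b x0 z k) $ p =
    (\<Sum>i<k + 1. (fab_rhs k - fab_Hbar A b x0 z k *\<^sub>v fab_y A b x0 z k) $ i * v i $ p)"
  unfolding fab_x_def using fab_residual[OF assms] x0 by simp

lemma fab_x_solves_iff_residual_eq_0:
  "A *\<^sub>v fab_x A b x0 z k = b \<longleftrightarrow> (\<forall>p < m. (b - A *\<^sub>v fab_x A b x0 z k) $ p = 0)"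
  using A b by (auto simp: vec_eq_iff)

lemma fab_x_solves_if_exact:
  assumes y: "fab_y A b x0 z k \<in> carrier_vec k"
    and exact: "fab_Hbar A b x0 z k *\<^sub>v fab_y A b x0 z k = fab_rhs k"
  shows "A *\<^sub>v fab_x A b x0 z k = b"
  unfolding fab_x_solves_iff_residual_eq_0 using fab_x_residual[OF y] exact by simp

lemma fab_exact_if_x_solves:
  assumes on: "orthonormal (fab_basis A b x0 z (k + 1))" and y: "fab_y A b x0 z k \<in> carrier_vec k"
    and solves: "A *\<^sub>v fab_x A b x0 z k = b"
  shows "fab_Hbar A b x0 z k *\<^sub>v fab_y A b x0 z k = fab_rhs k"
proof -
  let ?d = "fab_rhs k - fab_Hbar A b x0 z k *\<^sub>v fab_y A b x0 z k"
  have "?d $ i = 0" if "i < k + 1" for i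
  proof (rule orthonormal_lincomb_coeff_eq_0[OF on fab_basis_carrier])
    fix p assume "p < m"
    then show "(\<Sum>i<length (fab_basis A b x0 z (k + 1)). ?d $ i * fab_basis A b x0 z (k + 1) ! i $ p) = 0"
      using fab_x_residual[OF y] solves[unfolded fab_x_solves_iff_residual_eq_0]
      by (simp add: length_fab_basis fab_basis_nth)
  qed (use that length_fab_basis in simp)
  then show ?thesis using fab_Hbar_carrier[of A b x0 z k] by (intro eq_vecI) auto
qed

lemma fab_x_solves_if_breakdown:
  assumes "1 \<le> k" and "invertible_mat (fab_H A b x0 z k)" and "h (k + 1) k = 0"
  shows "A *\<^sub>v fab_x A b x0 z k = b"
proof -
  let ?G = "fab_Hbar A b x0 z k"
  have last_row: "?G $$ (k, j) = 0" if "j < k" for j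
    using that assms(3) fab_h_eq_0_below_subdiag[of "j + 1" "k + 1"] by (cases "j + 1 = k") (auto simp: index_fab_Hbar)
  have "\<exists>y \<in> carrier_vec k. ?G *\<^sub>v y = fab_rhs k"
    by (rule solvable_if_invertible_top_block[OF fab_Hbar_carrier fab_H_carrier assms(2)])
      (use last_row assms(1) in \<open>auto simp: index_fab_H index_fab_Hbar\<close>)
  then obtain y0 where y0: "y0 \<in> carrier_vec k" "?G *\<^sub>v y0 = fab_rhs k" by blast
  have "fab_rhs k - ?G *\<^sub>v y0 = 0\<^sub>v (k + 1)"
    unfolding y0(2) by (intro minus_cancel_vec) simp
  then have "vnorm (fab_rhs k - ?G *\<^sub>v y0) \<le> vnorm (fab_rhs k - ?G *\<^sub>v y')" for y'
    using vnorm_nonneg by (simp add: vnorm_def)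
  then have min: "fab_y A b x0 z k \<in> carrier_vec k \<and> (\<forall>y' \<in> carrier_vec k.
      vnorm (fab_rhs k - ?G *\<^sub>v fab_y A b x0 z k) \<le> vnorm (fab_rhs k - ?G *\<^sub>v y'))"
    using y0 by (intro fab_y_least_squares) blast
  then have "?G *\<^sub>v fab_y A b x0 z k = fab_rhs k"
    using least_squares_exact[OF fab_Hbar_carrier _ y0] y0(1) by simp
  then show ?thesis using fab_x_solves_if_exact min by blast
qed

lemma fab_x_not_solves_if_no_breakdown:
  assumes beta: "\<beta> \<noteq> 0" and "1 \<le> k" and subdiag: "\<And>i. 1 \<le> i \<Longrightarrow> i \<le> k \<Longrightarrow> h (i + 1) i \<noteq> 0"
  shows "A *\<^sub>v fab_x A b x0 z k \<noteq> b"
proof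
  assume solves: "A *\<^sub>v fab_x A b x0 z k = b"
  let ?G = "fab_Hbar A b x0 z k" and ?y = "fab_y A b x0 z k"
  have hess_zero: "y = 0\<^sub>v k" if "y \<in> carrier_vec k" "\<And>i. 1 \<le> i \<Longrightarrow> i \<le> k \<Longrightarrow> (?G *\<^sub>v y) $ i = 0" for y
    by (rule hessenberg_eq_0_if_rows_eq_0[OF fab_Hbar_carrier _ _ that])
      (use subdiag fab_h_eq_0_below_subdiag in \<open>auto simp: index_fab_Hbar\<close>)
  have "y = 0\<^sub>v k" if "y \<in> carrier_vec k" "?G *\<^sub>v y = 0\<^sub>v (k + 1)" for y
    using hess_zero[OF that(1)] that(2) by simp
  then obtain y where "y \<in> carrier_vec k"
    "\<forall>y' \<in> carrier_vec k. vnorm (fab_rhs k - ?G *\<^sub>v y) \<le> vnorm (fab_rhs k - ?G *\<^sub>v y')"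
    using least_squares_exists[OF fab_Hbar_carrier[of A b x0 z k], of "fab_rhs k"] by auto
  then have y: "?y \<in> carrier_vec k" using fab_y_least_squares by blast
  have "orthonormal (fab_basis A b x0 z (k + 1))"
    using fab_basis_orthonormal[OF beta] subdiag by simp
  then have exact: "?G *\<^sub>v ?y = fab_rhs k" using fab_exact_if_x_solves y solves by blast
  then have "?y = 0\<^sub>v k" using hess_zero[OF y] by simp
  then have "(?G *\<^sub>v ?y) $ 0 = 0" using fab_Hbar_carrier[of A b x0 z k] by (simp add: scalar_prod_def)
  then show False using exact beta by simp
qed

end

theorem theorem3p2:
  fixes A :: "real mat" and b x0 :: "real vec" and z :: "nat \<Rightarrow> real vec"
    and m n k :: nat
  assumes "A \<in> carrier_mat m n"
    and "b \<in> carrier_vec m"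
    and "x0 \<in> carrier_vec n"
    and "\<And>j. z j \<in> carrier_vec n"
    and "fab_beta A b x0 \<noteq> 0"
    and "k \<ge> 1"
    and "\<And>i. 1 \<le> i \<Longrightarrow> i < k \<Longrightarrow> fab_h A b x0 z (i + 1) i \<noteq> 0"
    and "invertible_mat (fab_H A b x0 z k)"
  shows "A *\<^sub>v fab_x A b x0 z k = b \<longleftrightarrow> fab_h A b x0 z (k + 1) k = 0"
proof -
  interpret fab_setup A b x0 z m n
    using assms(1-4) by unfold_locales
  show ?thesis
  proof
    assume "A *\<^sub>v fab_x A b x0 z k = b"
    then show "fab_h A b x0 z (k + 1) k = 0"
      using fab_x_not_solves_if_no_breakdown[OF assms(5,6)] assms(7) by (metis le_neq_implies_less)
  next
    assume "fab_h A b x0 z (k + 1) k = 0"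
    then show "A *\<^sub>v fab_x A b x0 z k = b"
      using fab_x_solves_if_breakdown[OF assms(6,8)] by blast
  qed
qed

end
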